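(* Let $(\mathscr{A},\mathscr{E})$ and $(\mathscr{B},\mathscr{F})$ be exact categories and let $L : \mathscr{A} \rightarrow \mathscr{B}$ be an exact functor. Define $\mathscr{E}_L^0 = \{ s \in \mathscr{E} : Ls \text{ is a split exact sequence in } \mathscr{B} \}$. Then $(\mathscr{A},\mathscr{E}_L^0)$ is an exact category.
   Context: An exact category $(\mathscr{A},\mathscr{E})$ is an additive category $\mathscr{A}$ together with a class $\mathscr{E}$ of kernel–cokernel pairs $X \rightarrowtail Y \twoheadrightarrow Z$ (conflations), closed under isomorphism, satisfying Quillen's axioms. An exact functor is an additive functor sending conflations to conflations. A sequence is split exact if it is isomorphic to $X \to X\oplus Z \to Z$ with the canonical inclusion and projection. *)

theory Defs
  imports Main
begin

text \<open>Additive categories are encoded as records: objects of type 'o, morphisms of type 'm,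
  hom-sets Hom a b, composition cmp g f (meaning g after f), identities, and the abelian
  group structure on hom-sets (pls, zro, ngt).\<close>

record ('o, 'm) addcat =
  Ob  :: "'o set"
  Hom :: "'o \<Rightarrow> 'o \<Rightarrow> 'm set"
  cmp :: "'m \<Rightarrow> 'm \<Rightarrow> 'm"
  idm :: "'o \<Rightarrow> 'm"
  pls :: "'m \<Rightarrow> 'm \<Rightarrow> 'm"
  zro :: "'o \<Rightarrow> 'o \<Rightarrow> 'm"
  ngt :: "'m \<Rightarrow> 'm"

type_synonym ('o, 'm) sseq = "'o \<times> 'o \<times> 'o \<times> 'm \<times> 'm"
  \<comment> \<open>(X, Y, Z, i, d) stands for the sequence X --i--> Y --d--> Z\<close>

definition category :: "('o, 'm, 'x) addcat_scheme \<Rightarrow> bool" where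
  "category C \<longleftrightarrow>
     (\<forall>a b f. f \<in> Hom C a b \<longrightarrow> a \<in> Ob C \<and> b \<in> Ob C) \<and>
     (\<forall>a \<in> Ob C. idm C a \<in> Hom C a a) \<and>
     (\<forall>a b c f g. f \<in> Hom C a b \<longrightarrow> g \<in> Hom C b c \<longrightarrow> cmp C g f \<in> Hom C a c) \<and>
     (\<forall>a b c d f g h. f \<in> Hom C a b \<longrightarrow> g \<in> Hom C b c \<longrightarrow> h \<in> Hom C c d \<longrightarrow>
         cmp C h (cmp C g f) = cmp C (cmp C h g) f) \<and>
     (\<forall>a b f. f \<in> Hom C a b \<longrightarrow> cmp C (idm C b) f = f \<and> cmp C f (idm C a) = f)"

definition preadditive :: "('o, 'm, 'x) addcat_scheme \<Rightarrow> bool" where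
  "preadditive C \<longleftrightarrow> category C \<and>
     (\<forall>a \<in> Ob C. \<forall>b \<in> Ob C.
        zro C a b \<in> Hom C a b \<and>
        (\<forall>f \<in> Hom C a b. \<forall>g \<in> Hom C a b. pls C f g \<in> Hom C a b) \<and>
        (\<forall>f \<in> Hom C a b. ngt C f \<in> Hom C a b) \<and>
        (\<forall>f \<in> Hom C a b. \<forall>g \<in> Hom C a b. \<forall>h \<in> Hom C a b.
            pls C (pls C f g) h = pls C f (pls C g h)) \<and>
        (\<forall>f \<in> Hom C a b. \<forall>g \<in> Hom C a b. pls C f g = pls C g f) \<and>
        (\<forall>f \<in> Hom C a b. pls C f (zro C a b) = f) \<and>
        (\<forall>f \<in> Hom C a b. pls C f (ngt C f) = zro C a b)) \<and>
     (\<forall>a b c f f' g. f \<in> Hom C a b \<longrightarrow> f' \<in> Hom C a b \<longrightarrow> g \<in> Hom C b c \<longrightarrow>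
         cmp C g (pls C f f') = pls C (cmp C g f) (cmp C g f')) \<and>
     (\<forall>a b c f g g'. f \<in> Hom C a b \<longrightarrow> g \<in> Hom C b c \<longrightarrow> g' \<in> Hom C b c \<longrightarrow>
         cmp C (pls C g g') f = pls C (cmp C g f) (cmp C g' f))"

definition is_biproduct ::
  "('o, 'm, 'x) addcat_scheme \<Rightarrow> 'o \<Rightarrow> 'o \<Rightarrow> 'o \<Rightarrow> 'm \<Rightarrow> 'm \<Rightarrow> 'm \<Rightarrow> 'm \<Rightarrow> bool" where
  "is_biproduct C a b s i1 i2 p1 p2 \<longleftrightarrow>
     s \<in> Ob C \<and> i1 \<in> Hom C a s \<and> i2 \<in> Hom C b s \<and> p1 \<in> Hom C s a \<and> p2 \<in> Hom C s b \<and>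
     cmp C p1 i1 = idm C a \<and> cmp C p2 i2 = idm C b \<and>
     cmp C p2 i1 = zro C a b \<and> cmp C p1 i2 = zro C b a \<and>
     pls C (cmp C i1 p1) (cmp C i2 p2) = idm C s"

definition additive :: "('o, 'm, 'x) addcat_scheme \<Rightarrow> bool" where
  "additive C \<longleftrightarrow> preadditive C \<and>
     (\<exists>z \<in> Ob C. idm C z = zro C z z) \<and>
     (\<forall>a \<in> Ob C. \<forall>b \<in> Ob C. \<exists>s i1 i2 p1 p2. is_biproduct C a b s i1 i2 p1 p2)"

definition iso :: "('o, 'm, 'x) addcat_scheme \<Rightarrow> 'o \<Rightarrow> 'o \<Rightarrow> 'm \<Rightarrow> bool" where
  "iso C a b f \<longleftrightarrow> f \<in> Hom C a b \<and>
     (\<exists>g \<in> Hom C b a. cmp C g f = idm C a \<and> cmp C f g = idm C b)"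

definition is_kernel ::
  "('o, 'm, 'x) addcat_scheme \<Rightarrow> 'o \<Rightarrow> 'o \<Rightarrow> 'o \<Rightarrow> 'm \<Rightarrow> 'm \<Rightarrow> bool" where
  "is_kernel C x y z i d \<longleftrightarrow> i \<in> Hom C x y \<and> d \<in> Hom C y z \<and> cmp C d i = zro C x z \<and>
     (\<forall>w \<in> Ob C. \<forall>g \<in> Hom C w y. cmp C d g = zro C w z \<longrightarrow>
        (\<exists>!h. h \<in> Hom C w x \<and> cmp C i h = g))"

definition is_cokernel ::
  "('o, 'm, 'x) addcat_scheme \<Rightarrow> 'o \<Rightarrow> 'o \<Rightarrow> 'o \<Rightarrow> 'm \<Rightarrow> 'm \<Rightarrow> bool" where
  "is_cokernel C x y z i d \<longleftrightarrow> i \<in> Hom C x y \<and> d \<in> Hom C y z \<and> cmp C d i = zro C x z \<and>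
     (\<forall>w \<in> Ob C. \<forall>g \<in> Hom C y w. cmp C g i = zro C x w \<longrightarrow>
        (\<exists>!h. h \<in> Hom C z w \<and> cmp C h d = g))"

definition kc_pair :: "('o, 'm, 'x) addcat_scheme \<Rightarrow> ('o, 'm) sseq \<Rightarrow> bool" where
  "kc_pair C s \<longleftrightarrow> (case s of (x, y, z, i, d) \<Rightarrow> is_kernel C x y z i d \<and> is_cokernel C x y z i d)"

definition iso_seq :: "('o, 'm, 'x) addcat_scheme \<Rightarrow> ('o, 'm) sseq \<Rightarrow> ('o, 'm) sseq \<Rightarrow> bool" where
  "iso_seq C s t \<longleftrightarrow>
     (case s of (x, y, z, i, d) \<Rightarrow> case t of (x', y', z', i', d') \<Rightarrow>
        i \<in> Hom C x y \<and> d \<in> Hom C y z \<and> i' \<in> Hom C x' y' \<and> d' \<in> Hom C y' z' \<and>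
        (\<exists>a b c. iso C x x' a \<and> iso C y y' b \<and> iso C z z' c \<and>
                 cmp C b i = cmp C i' a \<and> cmp C c d = cmp C d' b))"

definition adm_mono :: "('o, 'm, 'x) addcat_scheme \<Rightarrow> ('o, 'm) sseq set \<Rightarrow> 'o \<Rightarrow> 'o \<Rightarrow> 'm \<Rightarrow> bool" where
  "adm_mono C E x y i \<longleftrightarrow> (\<exists>z d. (x, y, z, i, d) \<in> E)"

definition adm_epi :: "('o, 'm, 'x) addcat_scheme \<Rightarrow> ('o, 'm) sseq set \<Rightarrow> 'o \<Rightarrow> 'o \<Rightarrow> 'm \<Rightarrow> bool" where
  "adm_epi C E y z d \<longleftrightarrow> (\<exists>x i. (x, y, z, i, d) \<in> E)"

definition is_pushout ::
  "('o, 'm, 'x) addcat_scheme \<Rightarrow> 'o \<Rightarrow> 'o \<Rightarrow> 'o \<Rightarrow> 'o \<Rightarrow> 'm \<Rightarrow> 'm \<Rightarrow> 'm \<Rightarrow> 'm \<Rightarrow> bool" where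
  "is_pushout C x y x' y' i f i' f' \<longleftrightarrow>
     i \<in> Hom C x y \<and> f \<in> Hom C x x' \<and> i' \<in> Hom C x' y' \<and> f' \<in> Hom C y y' \<and>
     cmp C f' i = cmp C i' f \<and>
     (\<forall>w \<in> Ob C. \<forall>g \<in> Hom C y w. \<forall>h \<in> Hom C x' w. cmp C g i = cmp C h f \<longrightarrow>
        (\<exists>!u. u \<in> Hom C y' w \<and> cmp C u f' = g \<and> cmp C u i' = h))"

definition is_pullback ::
  "('o, 'm, 'x) addcat_scheme \<Rightarrow> 'o \<Rightarrow> 'o \<Rightarrow> 'o \<Rightarrow> 'o \<Rightarrow> 'm \<Rightarrow> 'm \<Rightarrow> 'm \<Rightarrow> 'm \<Rightarrow> bool" where
  "is_pullback C y z y' z' d f d' f' \<longleftrightarrow>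
     d \<in> Hom C y z \<and> f \<in> Hom C z' z \<and> d' \<in> Hom C y' z' \<and> f' \<in> Hom C y' y \<and>
     cmp C d f' = cmp C f d' \<and>
     (\<forall>w \<in> Ob C. \<forall>g \<in> Hom C w y. \<forall>h \<in> Hom C w z'. cmp C d g = cmp C f h \<longrightarrow>
        (\<exists>!u. u \<in> Hom C w y' \<and> cmp C f' u = g \<and> cmp C d' u = h))"

definition exact_category :: "('o, 'm, 'x) addcat_scheme \<Rightarrow> ('o, 'm) sseq set \<Rightarrow> bool" where
  "exact_category C E \<longleftrightarrow>
     additive C \<and>
     (\<forall>s \<in> E. kc_pair C s) \<and>
     (\<forall>s \<in> E. \<forall>t. iso_seq C s t \<longrightarrow> t \<in> E) \<and>
     \<comment> \<open>[E0], [E0 op]\<close>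
     (\<forall>a \<in> Ob C. adm_mono C E a a (idm C a)) \<and>
     (\<forall>a \<in> Ob C. adm_epi C E a a (idm C a)) \<and>
     \<comment> \<open>[E1], [E1 op]\<close>
     (\<forall>x y w i j. adm_mono C E x y i \<longrightarrow> adm_mono C E y w j \<longrightarrow> adm_mono C E x w (cmp C j i)) \<and>
     (\<forall>x y w d e. adm_epi C E x y d \<longrightarrow> adm_epi C E y w e \<longrightarrow> adm_epi C E x w (cmp C e d)) \<and>
     \<comment> \<open>[E2]: pushouts of admissible monics exist and are admissible monics\<close>
     (\<forall>x y x' i f. adm_mono C E x y i \<longrightarrow> f \<in> Hom C x x' \<longrightarrow>
        (\<exists>y' i' f'. is_pushout C x y x' y' i f i' f' \<and> adm_mono C E x' y' i')) \<and>
     \<comment> \<open>[E2 op]: pullbacks of admissible epics exist and are admissible epics\<close>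
     (\<forall>y z z' d f. adm_epi C E y z d \<longrightarrow> f \<in> Hom C z' z \<longrightarrow>
        (\<exists>y' d' f'. is_pullback C y z y' z' d f d' f' \<and> adm_epi C E y' z' d'))"

definition additive_functor ::
  "('o, 'm, 'x) addcat_scheme \<Rightarrow> ('p, 'n, 'y) addcat_scheme \<Rightarrow> ('o \<Rightarrow> 'p) \<Rightarrow> ('m \<Rightarrow> 'n) \<Rightarrow> bool" where
  "additive_functor A B LO LM \<longleftrightarrow>
     (\<forall>a \<in> Ob A. LO a \<in> Ob B) \<and>
     (\<forall>a b f. f \<in> Hom A a b \<longrightarrow> LM f \<in> Hom B (LO a) (LO b)) \<and>
     (\<forall>a \<in> Ob A. LM (idm A a) = idm B (LO a)) \<and>
     (\<forall>a b c f g. f \<in> Hom A a b \<longrightarrow> g \<in> Hom A b c \<longrightarrow> LM (cmp A g f) = cmp B (LM g) (LM f)) \<and>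
     (\<forall>a b f g. f \<in> Hom A a b \<longrightarrow> g \<in> Hom A a b \<longrightarrow> LM (pls A f g) = pls B (LM f) (LM g))"

definition map_seq :: "('o \<Rightarrow> 'p) \<Rightarrow> ('m \<Rightarrow> 'n) \<Rightarrow> ('o, 'm) sseq \<Rightarrow> ('p, 'n) sseq" where
  "map_seq LO LM s = (case s of (x, y, z, i, d) \<Rightarrow> (LO x, LO y, LO z, LM i, LM d))"

definition exact_functor ::
  "('o, 'm, 'x) addcat_scheme \<Rightarrow> ('o, 'm) sseq set \<Rightarrow> ('p, 'n, 'y) addcat_scheme \<Rightarrow> ('p, 'n) sseq set
     \<Rightarrow> ('o \<Rightarrow> 'p) \<Rightarrow> ('m \<Rightarrow> 'n) \<Rightarrow> bool" where
  "exact_functor A E B F LO LM \<longleftrightarrow> additive_functor A B LO LM \<and>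
     (\<forall>s \<in> E. map_seq LO LM s \<in> F)"

definition split_exact :: "('o, 'm, 'x) addcat_scheme \<Rightarrow> ('o, 'm) sseq \<Rightarrow> bool" where
  "split_exact C s \<longleftrightarrow> (case s of (x, y, z, i, d) \<Rightarrow>
     (\<exists>S i1 i2 p1 p2. is_biproduct C x z S i1 i2 p1 p2 \<and> iso_seq C s (x, S, z, i1, p2)))"

definition E_L0 ::
  "('o, 'm) sseq set \<Rightarrow> ('p, 'n, 'y) addcat_scheme \<Rightarrow> ('o \<Rightarrow> 'p) \<Rightarrow> ('m \<Rightarrow> 'n) \<Rightarrow> ('o, 'm) sseq set" where
  "E_L0 E B LO LM = {s \<in> E. split_exact B (map_seq LO LM s)}"

end

theory Submission
  imports Defs
begin

text \<open>
  A conflation of E lies in E_L0 iff its image under L splits, and for a kernel-cokernel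
  pair in B this happens iff the image of the inflation has a retraction, equivalently iff the
  image of the deflation has a section (the splitting being i r + s d = 1).  Retractions and
  sections are preserved by functors, by composition and by isomorphisms of sequences, which
  gives every axiom except pushouts and pullbacks.  If a conflation (i, d) is pushed out along
  f to a conflation (i', d'), the map between the cokernels induced by the pushout has a right
  inverse k, so d' f' = h d turns a section s of L d into the section L f' (s (L k)) of L d';
  pullbacks are dual.
\<close>

locale preadditive_category =
  fixes C :: "('o, 'm, 'x) addcat_scheme"
  assumes preadditive: "preadditive C"
begin

lemma category: "category C"
  using preadditive unfolding preadditive_def by blast

lemma hom_dom: "f \<in> Hom C a b \<Longrightarrow> a \<in> Ob C"
  and hom_cod: "f \<in> Hom C a b \<Longrightarrow> b \<in> Ob C"
  using category unfolding category_def by blast+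

lemma idm_hom: "a \<in> Ob C \<Longrightarrow> idm C a \<in> Hom C a a"
  using category unfolding category_def by blast

lemma cmp_hom: "f \<in> Hom C a b \<Longrightarrow> g \<in> Hom C b c \<Longrightarrow> cmp C g f \<in> Hom C a c"
  using category unfolding category_def by blast

lemma cmp_assoc:
  "f \<in> Hom C a b \<Longrightarrow> g \<in> Hom C b c \<Longrightarrow> h \<in> Hom C c d \<Longrightarrow>
   cmp C h (cmp C g f) = cmp C (cmp C h g) f"
  using category unfolding category_def by blast

lemma cmp_idm_left: "f \<in> Hom C a b \<Longrightarrow> cmp C (idm C b) f = f"
  and cmp_idm_right: "f \<in> Hom C a b \<Longrightarrow> cmp C f (idm C a) = f"
  using category unfolding category_def by blast+

lemma hom_group_axioms:
  assumes "a \<in> Ob C" "b \<in> Ob C"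
  shows "zro C a b \<in> Hom C a b \<and>
     (\<forall>f \<in> Hom C a b. \<forall>g \<in> Hom C a b. pls C f g \<in> Hom C a b) \<and>
     (\<forall>f \<in> Hom C a b. ngt C f \<in> Hom C a b) \<and>
     (\<forall>f \<in> Hom C a b. \<forall>g \<in> Hom C a b. \<forall>h \<in> Hom C a b.
        pls C (pls C f g) h = pls C f (pls C g h)) \<and>
     (\<forall>f \<in> Hom C a b. \<forall>g \<in> Hom C a b. pls C f g = pls C g f) \<and>
     (\<forall>f \<in> Hom C a b. pls C f (zro C a b) = f) \<and>
     (\<forall>f \<in> Hom C a b. pls C f (ngt C f) = zro C a b)"
  using preadditive assms unfolding preadditive_def by (elim conjE) (drule bspec, assumption)+

lemma zro_hom: "a \<in> Ob C \<Longrightarrow> b \<in> Ob C \<Longrightarrow> zro C a b \<in> Hom C a b"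
  using hom_group_axioms by blast

lemma pls_hom:
  assumes "f \<in> Hom C a b" "g \<in> Hom C a b"
  shows "pls C f g \<in> Hom C a b"
  using hom_group_axioms[OF hom_dom[OF assms(1)] hom_cod[OF assms(1)]] assms by blast

lemma ngt_hom:
  assumes "f \<in> Hom C a b"
  shows "ngt C f \<in> Hom C a b"
  using hom_group_axioms[OF hom_dom[OF assms(1)] hom_cod[OF assms(1)]] assms by blast

lemma pls_assoc:
  assumes "f \<in> Hom C a b" "g \<in> Hom C a b" "h \<in> Hom C a b"
  shows "pls C (pls C f g) h = pls C f (pls C g h)"
  using hom_group_axioms[OF hom_dom[OF assms(1)] hom_cod[OF assms(1)]] assms by blast

lemma pls_commute:
  assumes "f \<in> Hom C a b" "g \<in> Hom C a b"
  shows "pls C f g = pls C g f"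
  using hom_group_axioms[OF hom_dom[OF assms(1)] hom_cod[OF assms(1)]] assms by blast

lemma pls_zro:
  assumes "f \<in> Hom C a b"
  shows "pls C f (zro C a b) = f"
  using hom_group_axioms[OF hom_dom[OF assms(1)] hom_cod[OF assms(1)]] assms by blast

lemma zro_pls:
  assumes "f \<in> Hom C a b"
  shows "pls C (zro C a b) f = f"
  using pls_commute[OF zro_hom[OF hom_dom[OF assms] hom_cod[OF assms]] assms] pls_zro[OF assms]
  by simp

lemma pls_ngt:
  assumes "f \<in> Hom C a b"
  shows "pls C f (ngt C f) = zro C a b"
  using hom_group_axioms[OF hom_dom[OF assms(1)] hom_cod[OF assms(1)]] assms by blast

lemma ngt_pls:
  assumes "f \<in> Hom C a b"
  shows "pls C (ngt C f) f = zro C a b"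
  using pls_commute[OF ngt_hom[OF assms] assms] pls_ngt[OF assms] by simp

lemma cmp_pls_left:
  "f \<in> Hom C a b \<Longrightarrow> f' \<in> Hom C a b \<Longrightarrow> g \<in> Hom C b c \<Longrightarrow>
   cmp C g (pls C f f') = pls C (cmp C g f) (cmp C g f')"
  using preadditive[unfolded preadditive_def, THEN conjunct2, THEN conjunct2] by blast

lemma cmp_pls_right:
  "f \<in> Hom C a b \<Longrightarrow> g \<in> Hom C b c \<Longrightarrow> g' \<in> Hom C b c \<Longrightarrow>
   cmp C (pls C g g') f = pls C (cmp C g f) (cmp C g' f)"
  using preadditive[unfolded preadditive_def, THEN conjunct2, THEN conjunct2] by blast

lemma pls_idem_eq_zro:
  assumes f: "f \<in> Hom C a b" and idem: "pls C f f = f"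
  shows "f = zro C a b"
proof -
  have "f = pls C f (pls C f (ngt C f))"
    using pls_ngt[OF f] pls_zro[OF f] by simp
  also have "\<dots> = pls C f (ngt C f)"
    using pls_assoc[OF f f ngt_hom[OF f]] idem by simp
  finally show ?thesis
    using pls_ngt[OF f] by simp
qed

lemma ngt_unique:
  assumes f: "f \<in> Hom C a b" and g: "g \<in> Hom C a b" and "pls C f g = zro C a b"
  shows "g = ngt C f"
proof -
  have "g = pls C (pls C (ngt C f) f) g"
    using ngt_pls[OF f] zro_pls[OF g] by simp
  also have "\<dots> = ngt C f"
    using pls_assoc[OF ngt_hom[OF f] f g] assms(3) pls_zro[OF ngt_hom[OF f]] by simp
  finally show ?thesis .
qed

lemma cmp_zro_left:
  assumes f: "f \<in> Hom C a b" and c: "c \<in> Ob C"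
  shows "cmp C (zro C b c) f = zro C a c"
proof (rule pls_idem_eq_zro)
  have z: "zro C b c \<in> Hom C b c"
    using zro_hom[OF hom_cod[OF f] c] .
  then show "cmp C (zro C b c) f \<in> Hom C a c"
    using cmp_hom[OF f] by blast
  show "pls C (cmp C (zro C b c) f) (cmp C (zro C b c) f) = cmp C (zro C b c) f"
    using cmp_pls_right[OF f z z, symmetric] pls_zro[OF z] by simp
qed

lemma cmp_zro_right:
  assumes g: "g \<in> Hom C b c" and a: "a \<in> Ob C"
  shows "cmp C g (zro C a b) = zro C a c"
proof (rule pls_idem_eq_zro)
  have z: "zro C a b \<in> Hom C a b"
    using zro_hom[OF a hom_dom[OF g]] .
  then show "cmp C g (zro C a b) \<in> Hom C a c"
    using cmp_hom[OF _ g] by blast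
  show "pls C (cmp C g (zro C a b)) (cmp C g (zro C a b)) = cmp C g (zro C a b)"
    using cmp_pls_left[OF z z g, symmetric] pls_zro[OF z] by simp
qed

lemma cmp_ngt_left:
  assumes f: "f \<in> Hom C a b" and g: "g \<in> Hom C b c"
  shows "cmp C (ngt C g) f = ngt C (cmp C g f)"
proof (rule ngt_unique)
  show "pls C (cmp C g f) (cmp C (ngt C g) f) = zro C a c"
    using cmp_pls_right[OF f g ngt_hom[OF g], symmetric] pls_ngt[OF g] cmp_zro_left[OF f hom_cod[OF g]]
    by simp
qed (use cmp_hom[OF f g] cmp_hom[OF f ngt_hom[OF g]] in simp_all)

lemma cmp_ngt_right:
  assumes f: "f \<in> Hom C a b" and g: "g \<in> Hom C b c"
  shows "cmp C g (ngt C f) = ngt C (cmp C g f)"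
proof (rule ngt_unique)
  show "pls C (cmp C g f) (cmp C g (ngt C f)) = zro C a c"
    using cmp_pls_left[OF f ngt_hom[OF f] g, symmetric] pls_ngt[OF f] cmp_zro_right[OF g hom_dom[OF f]]
    by simp
qed (use cmp_hom[OF f g] cmp_hom[OF ngt_hom[OF f] g] in simp_all)

lemma kernel_homs:
  assumes "is_kernel C x y z i d"
  shows "i \<in> Hom C x y" "d \<in> Hom C y z" "cmp C d i = zro C x z"
  using assms unfolding is_kernel_def by blast+

lemma cokernel_homs:
  assumes "is_cokernel C x y z i d"
  shows "i \<in> Hom C x y" "d \<in> Hom C y z" "cmp C d i = zro C x z"
  using assms unfolding is_cokernel_def by blast+

lemma kernel_unique_factor:
  assumes "is_kernel C x y z i d" "g \<in> Hom C w y" "cmp C d g = zro C w z"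
  shows "\<exists>!h. h \<in> Hom C w x \<and> cmp C i h = g"
  using assms(1)[unfolded is_kernel_def, THEN conjunct2, THEN conjunct2, THEN conjunct2]
    hom_dom[OF assms(2)] assms(2,3) by blast

lemma cokernel_unique_factor:
  assumes "is_cokernel C x y z i d" "g \<in> Hom C y w" "cmp C g i = zro C x w"
  shows "\<exists>!h. h \<in> Hom C z w \<and> cmp C h d = g"
  using assms(1)[unfolded is_cokernel_def, THEN conjunct2, THEN conjunct2, THEN conjunct2]
    hom_cod[OF assms(2)] assms(2,3) by blast

lemma kernel_cancel:
  assumes K: "is_kernel C x y z i d" and g: "g \<in> Hom C w x" and g': "g' \<in> Hom C w x"
    and eq: "cmp C i g = cmp C i g'"
  shows "g = g'"
proof -
  note i = kernel_homs[OF K]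
  have "cmp C d (cmp C i g) = zro C w z"
    using cmp_assoc[OF g i(1,2)] i(3) cmp_zro_left[OF g hom_cod[OF i(2)]] by simp
  then have "\<exists>!h. h \<in> Hom C w x \<and> cmp C i h = cmp C i g"
    using kernel_unique_factor[OF K cmp_hom[OF g i(1)]] by blast
  then show ?thesis
    using g g' eq by (elim ex1E) auto
qed

lemma cokernel_cancel:
  assumes Q: "is_cokernel C x y z i d" and g: "g \<in> Hom C z w" and g': "g' \<in> Hom C z w"
    and eq: "cmp C g d = cmp C g' d"
  shows "g = g'"
proof -
  note i = cokernel_homs[OF Q]
  have "cmp C (cmp C g d) i = zro C x w"
    using cmp_assoc[OF i(1,2) g] i(3) cmp_zro_right[OF g hom_dom[OF i(1)]] by simp
  then have "\<exists>!h. h \<in> Hom C z w \<and> cmp C h d = cmp C g d"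
    using cokernel_unique_factor[OF Q cmp_hom[OF i(2) g]] by blast
  then show ?thesis
    using g g' eq by (elim ex1E) auto
qed

lemma pushout_homs:
  assumes "is_pushout C x y x' y' i f i' f'"
  shows "i \<in> Hom C x y" "f \<in> Hom C x x'" "i' \<in> Hom C x' y'" "f' \<in> Hom C y y'"
    "cmp C f' i = cmp C i' f"
  using assms unfolding is_pushout_def by blast+

lemma pullback_homs:
  assumes "is_pullback C y z y' z' d f d' f'"
  shows "d \<in> Hom C y z" "f \<in> Hom C z' z" "d' \<in> Hom C y' z'" "f' \<in> Hom C y' y"
    "cmp C d f' = cmp C f d'"
  using assms unfolding is_pullback_def by blast+

lemma pushout_unique_factor:
  assumes "is_pushout C x y x' y' i f i' f'" "g \<in> Hom C y w" "h \<in> Hom C x' w"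
    and "cmp C g i = cmp C h f"
  shows "\<exists>!u. u \<in> Hom C y' w \<and> cmp C u f' = g \<and> cmp C u i' = h"
  using assms(1)[unfolded is_pushout_def, THEN conjunct2, THEN conjunct2, THEN conjunct2,
      THEN conjunct2, THEN conjunct2]
    hom_cod[OF assms(2)] assms(2-4) by blast

lemma pullback_unique_factor:
  assumes "is_pullback C y z y' z' d f d' f'" "g \<in> Hom C w y" "h \<in> Hom C w z'"
    and "cmp C d g = cmp C f h"
  shows "\<exists>!u. u \<in> Hom C w y' \<and> cmp C f' u = g \<and> cmp C d' u = h"
  using assms(1)[unfolded is_pullback_def, THEN conjunct2, THEN conjunct2, THEN conjunct2,
      THEN conjunct2, THEN conjunct2]
    hom_dom[OF assms(2)] assms(2-4) by blast

lemma pushout_cancel: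
  assumes P: "is_pushout C x y x' y' i f i' f'" and u: "u \<in> Hom C y' w" and v: "v \<in> Hom C y' w"
    and eq: "cmp C u f' = cmp C v f'" "cmp C u i' = cmp C v i'"
  shows "u = v"
proof -
  note h = pushout_homs[OF P]
  have "cmp C (cmp C u f') i = cmp C (cmp C u i') f"
    using cmp_assoc[OF h(1,4) u] cmp_assoc[OF h(2,3) u] h(5) by simp
  then have "\<exists>!t. t \<in> Hom C y' w \<and> cmp C t f' = cmp C u f' \<and> cmp C t i' = cmp C u i'"
    using pushout_unique_factor[OF P cmp_hom[OF h(4) u] cmp_hom[OF h(3) u]] by blast
  then show ?thesis
    using u v eq by (elim ex1E) auto
qed

lemma pullback_cancel:
  assumes P: "is_pullback C y z y' z' d f d' f'" and u: "u \<in> Hom C w y'" and v: "v \<in> Hom C w y'"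
    and eq: "cmp C f' u = cmp C f' v" "cmp C d' u = cmp C d' v"
  shows "u = v"
proof -
  note h = pullback_homs[OF P]
  have "cmp C d (cmp C f' u) = cmp C f (cmp C d' u)"
    using cmp_assoc[OF u h(4,1)] cmp_assoc[OF u h(3,2)] h(5) by simp
  then have "\<exists>!t. t \<in> Hom C w y' \<and> cmp C f' t = cmp C f' u \<and> cmp C d' t = cmp C d' u"
    using pullback_unique_factor[OF P cmp_hom[OF u h(4)] cmp_hom[OF u h(3)]] by blast
  then show ?thesis
    using u v eq by (elim ex1E) auto
qed

lemma pls_eq_right_imp_zro:
  assumes f: "f \<in> Hom C a b" and g: "g \<in> Hom C a b" and eq: "pls C f g = g"
  shows "f = zro C a b"
proof -
  have "f = pls C f (pls C g (ngt C g))"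
    using pls_ngt[OF g] pls_zro[OF f] by simp
  also have "\<dots> = zro C a b"
    using pls_assoc[OF f g ngt_hom[OF g], symmetric] eq pls_ngt[OF g] by simp
  finally show ?thesis .
qed

lemma pls_ngt_cancel:
  assumes f: "f \<in> Hom C a b" and g: "g \<in> Hom C a b"
  shows "pls C f (pls C g (ngt C f)) = g"
  using pls_commute[OF g ngt_hom[OF f]] pls_assoc[OF f ngt_hom[OF f] g, symmetric]
    pls_ngt[OF f] zro_pls[OF g] by simp

text \<open>The remaining biproduct identities follow by cancelling the monic i and the epic d.\<close>
lemma kc_pair_biproduct:
  assumes kc: "kc_pair C (X, Y, Z, i, d)" and r: "r \<in> Hom C Y X" and s: "s \<in> Hom C Z Y"
    and sum: "pls C (cmp C i r) (cmp C s d) = idm C Y"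
  shows "is_biproduct C X Z Y i s r d"
proof -
  have K: "is_kernel C X Y Z i d" and Q: "is_cokernel C X Y Z i d"
    using kc unfolding kc_pair_def by simp_all
  note h = kernel_homs[OF K]
  have ob: "X \<in> Ob C" "Y \<in> Ob C" "Z \<in> Ob C"
    using h hom_dom hom_cod by blast+
  have ir: "cmp C i r \<in> Hom C Y Y" and sd: "cmp C s d \<in> Hom C Y Y"
    using cmp_hom r s h by blast+
  have sdi: "cmp C (cmp C s d) i = zro C X Y"
    using cmp_assoc[OF h(1,2) s, symmetric] h(3) cmp_zro_right[OF s ob(1)] by simp
  have dir: "cmp C d (cmp C i r) = zro C Y Z"
    using cmp_assoc[OF r h(1,2)] h(3) cmp_zro_left[OF r ob(3)] by simp
  have "cmp C i (cmp C r i) = pls C (cmp C (cmp C i r) i) (cmp C (cmp C s d) i)"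
    using cmp_assoc[OF h(1) r h(1)] sdi pls_zro[OF cmp_hom[OF h(1) ir]] by simp
  also have "\<dots> = cmp C i (idm C X)"
    using cmp_pls_right[OF h(1) ir sd, symmetric] sum cmp_idm_left[OF h(1)] cmp_idm_right[OF h(1)]
    by simp
  finally have ri: "cmp C r i = idm C X"
    using kernel_cancel[OF K cmp_hom[OF h(1) r] idm_hom[OF ob(1)]] by blast
  have "cmp C (cmp C d s) d = pls C (cmp C d (cmp C i r)) (cmp C d (cmp C s d))"
    using cmp_assoc[OF h(2) s h(2)] dir zro_pls[OF cmp_hom[OF sd h(2)]] by simp
  also have "\<dots> = cmp C (idm C Z) d"
    using cmp_pls_left[OF ir sd h(2), symmetric] sum cmp_idm_left[OF h(2)] cmp_idm_right[OF h(2)]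
    by simp
  finally have ds: "cmp C d s = idm C Z"
    using cokernel_cancel[OF Q cmp_hom[OF s h(2)] idm_hom[OF ob(3)]] by blast
  have "pls C (cmp C i (cmp C r s)) s = pls C (cmp C (cmp C i r) s) (cmp C (cmp C s d) s)"
    using cmp_assoc[OF s r h(1)] cmp_assoc[OF s h(2) s, symmetric] ds cmp_idm_right[OF s] by simp
  also have "\<dots> = s"
    using cmp_pls_right[OF s ir sd, symmetric] sum cmp_idm_left[OF s] by simp
  finally have "cmp C i (cmp C r s) = cmp C i (zro C Z X)"
    using pls_eq_right_imp_zro[OF cmp_hom[OF cmp_hom[OF s r] h(1)] s]
      cmp_zro_right[OF h(1) ob(3)] by simp
  then have rs: "cmp C r s = zro C Z X"
    using kernel_cancel[OF K cmp_hom[OF s r] zro_hom[OF ob(3) ob(1)]] by blast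
  show ?thesis
    unfolding is_biproduct_def using ob(2) h r s ri ds rs sum by (intro conjI)
qed

lemma iso_idm: "a \<in> Ob C \<Longrightarrow> iso C a a (idm C a)"
  unfolding iso_def using idm_hom cmp_idm_left by blast

lemma iso_seq_refl:
  assumes i: "i \<in> Hom C X Y" and d: "d \<in> Hom C Y Z"
  shows "iso_seq C (X, Y, Z, i, d) (X, Y, Z, i, d)"
proof -
  have "X \<in> Ob C" "Y \<in> Ob C" "Z \<in> Ob C"
    using i d hom_dom hom_cod by blast+
  then show ?thesis
    unfolding iso_seq_def prod.case
    using i d iso_idm cmp_idm_left[OF i] cmp_idm_right[OF i] cmp_idm_left[OF d] cmp_idm_right[OF d]
    by metis
qed

lemma split_exact_of_biproduct:
  "is_biproduct C X Z Y i s r d \<Longrightarrow> split_exact C (X, Y, Z, i, d)"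
  unfolding split_exact_def prod.case using iso_seq_refl unfolding is_biproduct_def by blast

lemma split_exact_of_retraction:
  assumes kc: "kc_pair C (X, Y, Z, i, d)" and r: "r \<in> Hom C Y X" and ri: "cmp C r i = idm C X"
  shows "split_exact C (X, Y, Z, i, d)"
proof -
  have K: "is_kernel C X Y Z i d" and Q: "is_cokernel C X Y Z i d"
    using kc unfolding kc_pair_def by simp_all
  note h = kernel_homs[OF K]
  have Y: "Y \<in> Ob C"
    using hom_cod[OF h(1)] .
  have ir: "cmp C i r \<in> Hom C Y Y"
    using cmp_hom[OF r h(1)] .
  define e where "e = pls C (idm C Y) (ngt C (cmp C i r))"
  have e: "e \<in> Hom C Y Y"
    unfolding e_def using pls_hom[OF idm_hom[OF Y] ngt_hom[OF ir]] .
  have "cmp C e i = pls C i (ngt C (cmp C i (cmp C r i)))"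
    unfolding e_def using cmp_pls_right[OF h(1) idm_hom[OF Y] ngt_hom[OF ir]]
      cmp_idm_left[OF h(1)] cmp_ngt_left[OF h(1) ir] cmp_assoc[OF h(1) r h(1)] by simp
  also have "\<dots> = zro C X Y"
    using ri cmp_idm_right[OF h(1)] pls_ngt[OF h(1)] by simp
  finally obtain s where s: "s \<in> Hom C Z Y" "cmp C s d = e"
    using cokernel_unique_factor[OF Q e] by blast
  have "pls C (cmp C i r) (cmp C s d) = idm C Y"
    unfolding s(2) e_def using pls_ngt_cancel[OF ir idm_hom[OF Y]] .
  then show ?thesis
    using split_exact_of_biproduct kc_pair_biproduct[OF kc r s(1)] by blast
qed

lemma split_exact_of_section:
  assumes kc: "kc_pair C (X, Y, Z, i, d)" and s: "s \<in> Hom C Z Y" and ds: "cmp C d s = idm C Z"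
  shows "split_exact C (X, Y, Z, i, d)"
proof -
  have K: "is_kernel C X Y Z i d"
    using kc unfolding kc_pair_def by simp
  note h = kernel_homs[OF K]
  have Y: "Y \<in> Ob C"
    using hom_cod[OF h(1)] .
  have sd: "cmp C s d \<in> Hom C Y Y"
    using cmp_hom[OF h(2) s] .
  define e where "e = pls C (idm C Y) (ngt C (cmp C s d))"
  have e: "e \<in> Hom C Y Y"
    unfolding e_def using pls_hom[OF idm_hom[OF Y] ngt_hom[OF sd]] .
  have "cmp C d e = pls C d (ngt C (cmp C (cmp C d s) d))"
    unfolding e_def using cmp_pls_left[OF idm_hom[OF Y] ngt_hom[OF sd] h(2)]
      cmp_idm_right[OF h(2)] cmp_ngt_right[OF sd h(2)] cmp_assoc[OF h(2) s h(2)] by simp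
  also have "\<dots> = zro C Y Z"
    using ds cmp_idm_left[OF h(2)] pls_ngt[OF h(2)] by simp
  finally obtain r where r: "r \<in> Hom C Y X" "cmp C i r = e"
    using kernel_unique_factor[OF K e] by blast
  have "pls C (cmp C i r) (cmp C s d) = idm C Y"
    unfolding r(2) e_def
    using pls_assoc[OF idm_hom[OF Y] ngt_hom[OF sd] sd] ngt_pls[OF sd] pls_zro[OF idm_hom[OF Y]]
    by simp
  then show ?thesis
    using split_exact_of_biproduct kc_pair_biproduct[OF kc r(1) s] by blast
qed

lemma inverse_square:
  assumes i: "i \<in> Hom C X Y" and i': "i' \<in> Hom C X' Y'"
    and a: "a \<in> Hom C X X'" "a' \<in> Hom C X' X" "cmp C a a' = idm C X'"
    and b: "b \<in> Hom C Y Y'" "b' \<in> Hom C Y' Y" "cmp C b' b = idm C Y"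
    and sq: "cmp C b i = cmp C i' a"
  shows "cmp C b' i' = cmp C i a'"
proof -
  have "cmp C b' i' = cmp C b' (cmp C i' (cmp C a a'))"
    using a(3) cmp_idm_right[OF i'] by simp
  also have "\<dots> = cmp C (cmp C b' b) (cmp C i a')"
    using sq cmp_assoc[OF a(2,1) i'] cmp_assoc[OF a(2) i b(1)]
      cmp_assoc[OF cmp_hom[OF a(2) i] b(1,2)] by simp
  finally show ?thesis
    using b(3) cmp_idm_left[OF cmp_hom[OF a(2) i]] by simp
qed

lemma iso_inverse:
  assumes "iso C a b f"
  obtains g where "iso C b a g" "cmp C g f = idm C a" "cmp C f g = idm C b"
  using assms unfolding iso_def by blast

lemma iso_seq_sym:
  assumes "iso_seq C (X, Y, Z, i, d) (X', Y', Z', i', d')"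
  shows "iso_seq C (X', Y', Z', i', d') (X, Y, Z, i, d)"
proof -
  obtain \<alpha> \<beta> \<gamma> where h: "i \<in> Hom C X Y" "d \<in> Hom C Y Z" "i' \<in> Hom C X' Y'" "d' \<in> Hom C Y' Z'"
    and isos: "iso C X X' \<alpha>" "iso C Y Y' \<beta>" "iso C Z Z' \<gamma>"
    and sq: "cmp C \<beta> i = cmp C i' \<alpha>" "cmp C \<gamma> d = cmp C d' \<beta>"
    using assms unfolding iso_seq_def by auto
  obtain \<alpha>' \<beta>' \<gamma>' where isos': "iso C X' X \<alpha>'" "iso C Y' Y \<beta>'" "iso C Z' Z \<gamma>'"
    and inv: "cmp C \<alpha> \<alpha>' = idm C X'" "cmp C \<beta> \<beta>' = idm C Y'" "cmp C \<beta>' \<beta> = idm C Y"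
      "cmp C \<gamma>' \<gamma> = idm C Z"
    using iso_inverse[OF isos(1)] iso_inverse[OF isos(2)] iso_inverse[OF isos(3)] by metis
  have homs: "\<alpha> \<in> Hom C X X'" "\<alpha>' \<in> Hom C X' X" "\<beta> \<in> Hom C Y Y'" "\<beta>' \<in> Hom C Y' Y"
    "\<gamma> \<in> Hom C Z Z'" "\<gamma>' \<in> Hom C Z' Z"
    using isos isos' unfolding iso_def by blast+
  have "cmp C \<beta>' i' = cmp C i \<alpha>'" "cmp C \<gamma>' d' = cmp C d \<beta>'"
    using inverse_square[OF h(1,3) homs(1,2) inv(1) homs(3,4) inv(3) sq(1)]
      inverse_square[OF h(2,4) homs(3,4) inv(2) homs(5,6) inv(4) sq(2)] by blast+
  then show ?thesis
    unfolding iso_seq_def prod.case using h isos' by blast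
qed

lemma iso_seq_retraction:
  assumes "iso_seq C (X, Y, Z, i, d) (X', Y', Z', i', d')"
    and r': "r' \<in> Hom C Y' X'" "cmp C r' i' = idm C X'"
  shows "\<exists>r \<in> Hom C Y X. cmp C r i = idm C X"
proof -
  obtain \<alpha> \<beta> where h: "i \<in> Hom C X Y" "i' \<in> Hom C X' Y'"
    and isos: "iso C X X' \<alpha>" "iso C Y Y' \<beta>" and sq: "cmp C \<beta> i = cmp C i' \<alpha>"
    using assms(1) unfolding iso_seq_def by auto
  obtain \<alpha>' where \<alpha>: "\<alpha> \<in> Hom C X X'" "\<alpha>' \<in> Hom C X' X" "cmp C \<alpha>' \<alpha> = idm C X"
    using isos(1) unfolding iso_def by auto
  have \<beta>: "\<beta> \<in> Hom C Y Y'"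
    using isos(2) unfolding iso_def by blast
  have "cmp C (cmp C \<alpha>' (cmp C r' \<beta>)) i = cmp C \<alpha>' (cmp C (cmp C r' i') \<alpha>)"
    using sq cmp_assoc[OF h(1) cmp_hom[OF \<beta> r'(1)] \<alpha>(2)] cmp_assoc[OF h(1) \<beta> r'(1)]
      cmp_assoc[OF \<alpha>(1) h(2) r'(1)] by simp
  then have "cmp C (cmp C \<alpha>' (cmp C r' \<beta>)) i = idm C X"
    using r'(2) cmp_idm_left[OF \<alpha>(1)] \<alpha>(3) by simp
  then show ?thesis
    using cmp_hom[OF cmp_hom[OF \<beta> r'(1)] \<alpha>(2)] by blast
qed

lemma iso_seq_section:
  assumes "iso_seq C (X, Y, Z, i, d) (X', Y', Z', i', d')"
    and s': "s' \<in> Hom C Z' Y'" "cmp C d' s' = idm C Z'"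
  shows "\<exists>s \<in> Hom C Z Y. cmp C d s = idm C Z"
proof -
  obtain \<beta> \<gamma> where d: "d \<in> Hom C Y Z" "d' \<in> Hom C Y' Z'"
    and isos: "iso C Y Y' \<beta>" "iso C Z Z' \<gamma>" and sq: "cmp C \<gamma> d = cmp C d' \<beta>"
    using assms(1) unfolding iso_seq_def by auto
  obtain \<beta>' where \<beta>: "\<beta> \<in> Hom C Y Y'" "\<beta>' \<in> Hom C Y' Y" "cmp C \<beta> \<beta>' = idm C Y'"
    using isos(1) unfolding iso_def by auto
  obtain \<gamma>' where \<gamma>: "\<gamma> \<in> Hom C Z Z'" "\<gamma>' \<in> Hom C Z' Z" "cmp C \<gamma>' \<gamma> = idm C Z"
    using isos(2) unfolding iso_def by auto
  have "cmp C d (cmp C \<beta>' (cmp C s' \<gamma>)) = cmp C (cmp C \<gamma>' d') (cmp C s' \<gamma>)"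
    using inverse_square[OF d \<beta> \<gamma> sq] cmp_assoc[OF cmp_hom[OF \<gamma>(1) s'(1)] \<beta>(2) d(1)] by simp
  also have "\<dots> = cmp C \<gamma>' (cmp C (cmp C d' s') \<gamma>)"
    using cmp_assoc[OF cmp_hom[OF \<gamma>(1) s'(1)] d(2) \<gamma>(2), symmetric] cmp_assoc[OF \<gamma>(1) s'(1) d(2)]
    by simp
  also have "\<dots> = idm C Z"
    using s'(2) cmp_idm_left[OF \<gamma>(1)] \<gamma>(3) by simp
  finally show ?thesis
    using cmp_hom[OF cmp_hom[OF \<gamma>(1) s'(1)] \<beta>(2)] by blast
qed

lemma split_exact_retraction_section:
  assumes "split_exact C (X, Y, Z, i, d)"
  shows "\<exists>r \<in> Hom C Y X. cmp C r i = idm C X" and "\<exists>s \<in> Hom C Z Y. cmp C d s = idm C Z"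
proof -
  obtain S i1 i2 p1 p2 where bp: "is_biproduct C X Z S i1 i2 p1 p2"
    and isq: "iso_seq C (X, Y, Z, i, d) (X, S, Z, i1, p2)"
    using assms unfolding split_exact_def by auto
  have "p1 \<in> Hom C S X" "cmp C p1 i1 = idm C X" "i2 \<in> Hom C Z S" "cmp C p2 i2 = idm C Z"
    using bp unfolding is_biproduct_def by auto
  then show "\<exists>r \<in> Hom C Y X. cmp C r i = idm C X" "\<exists>s \<in> Hom C Z Y. cmp C d s = idm C Z"
    using iso_seq_retraction[OF isq] iso_seq_section[OF isq] by blast+
qed

lemma kc_pair_split_exact_iff_retraction:
  assumes "kc_pair C (X, Y, Z, i, d)"
  shows "split_exact C (X, Y, Z, i, d) \<longleftrightarrow> (\<exists>r \<in> Hom C Y X. cmp C r i = idm C X)"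
  using split_exact_of_retraction[OF assms] split_exact_retraction_section(1) by blast

lemma kc_pair_split_exact_iff_section:
  assumes "kc_pair C (X, Y, Z, i, d)"
  shows "split_exact C (X, Y, Z, i, d) \<longleftrightarrow> (\<exists>s \<in> Hom C Z Y. cmp C d s = idm C Z)"
  using split_exact_of_section[OF assms] split_exact_retraction_section(2) by blast

text \<open>The comparison map h is in fact an isomorphism; only its right inverse is needed.\<close>
lemma pushout_cokernel_comparison:
  assumes Q: "is_cokernel C x y z i d" and Q': "is_cokernel C x' y' z' i' d'"
    and P: "is_pushout C x y x' y' i f i' f'"
  shows "\<exists>h \<in> Hom C z z'. \<exists>k \<in> Hom C z' z. cmp C h d = cmp C d' f' \<and> cmp C h k = idm C z'"
proof -
  note c = cokernel_homs[OF Q] and c' = cokernel_homs[OF Q'] and p = pushout_homs[OF P]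
  have ob: "z \<in> Ob C" "z' \<in> Ob C" "x' \<in> Ob C"
    using c c' hom_dom hom_cod by blast+
  have "cmp C d i = cmp C (zro C x' z) f"
    using c(3) cmp_zro_left[OF p(2) ob(1)] by simp
  then obtain u where u: "u \<in> Hom C y' z" "cmp C u f' = d" "cmp C u i' = zro C x' z"
    using pushout_unique_factor[OF P c(2) zro_hom[OF ob(3,1)]] by blast
  obtain k where k: "k \<in> Hom C z' z" "cmp C k d' = u"
    using cokernel_unique_factor[OF Q' u(1,3)] by blast
  have "cmp C (cmp C d' f') i = cmp C (cmp C d' i') f"
    using cmp_assoc[OF c(1) p(4) c'(2), symmetric] p(5) cmp_assoc[OF p(2,3) c'(2)] by simp
  then have "cmp C (cmp C d' f') i = zro C x z'"
    using c'(3) cmp_zro_left[OF p(2) ob(2)] by simp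
  then obtain h where h: "h \<in> Hom C z z'" "cmp C h d = cmp C d' f'"
    using cokernel_unique_factor[OF Q cmp_hom[OF p(4) c'(2)]] by blast
  have "cmp C h u = d'"
  proof (rule pushout_cancel[OF P cmp_hom[OF u(1) h(1)] c'(2)])
    show "cmp C (cmp C h u) f' = cmp C d' f'"
      using cmp_assoc[OF p(4) u(1) h(1), symmetric] u(2) h(2) by simp
    show "cmp C (cmp C h u) i' = cmp C d' i'"
      using cmp_assoc[OF p(3) u(1) h(1), symmetric] u(3) cmp_zro_right[OF h(1) ob(3)] c'(3) by simp
  qed
  then have "cmp C h k = idm C z'"
    using cokernel_cancel[OF Q' cmp_hom[OF k(1) h(1)] idm_hom[OF ob(2)]]
      cmp_assoc[OF c'(2) k(1) h(1)] k(2) cmp_idm_left[OF c'(2)] by simp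
  then show ?thesis
    using h k by blast
qed

lemma pullback_kernel_comparison:
  assumes K: "is_kernel C x y z i d" and K': "is_kernel C x' y' z' i' d'"
    and P: "is_pullback C y z y' z' d f d' f'"
  shows "\<exists>h \<in> Hom C x' x. \<exists>k \<in> Hom C x x'. cmp C i h = cmp C f' i' \<and> cmp C k h = idm C x'"
proof -
  note c = kernel_homs[OF K] and c' = kernel_homs[OF K'] and p = pullback_homs[OF P]
  have ob: "x \<in> Ob C" "x' \<in> Ob C" "z' \<in> Ob C"
    using c c' hom_dom hom_cod by blast+
  have "cmp C d i = cmp C f (zro C x z')"
    using c(3) cmp_zro_right[OF p(2) ob(1)] by simp
  then obtain u where u: "u \<in> Hom C x y'" "cmp C f' u = i" "cmp C d' u = zro C x z'"
    using pullback_unique_factor[OF P c(1) zro_hom[OF ob(1,3)]] by blast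
  obtain k where k: "k \<in> Hom C x x'" "cmp C i' k = u"
    using kernel_unique_factor[OF K' u(1,3)] by blast
  have "cmp C d (cmp C f' i') = cmp C f (cmp C d' i')"
    using cmp_assoc[OF c'(1) p(4) c(2)] p(5) cmp_assoc[OF c'(1) p(3,2), symmetric] by simp
  then have "cmp C d (cmp C f' i') = zro C x' z"
    using c'(3) cmp_zro_right[OF p(2) ob(2)] by simp
  then obtain h where h: "h \<in> Hom C x' x" "cmp C i h = cmp C f' i'"
    using kernel_unique_factor[OF K cmp_hom[OF c'(1) p(4)]] by blast
  have "cmp C u h = i'"
  proof (rule pullback_cancel[OF P cmp_hom[OF h(1) u(1)] c'(1)])
    show "cmp C f' (cmp C u h) = cmp C f' i'"
      using cmp_assoc[OF h(1) u(1) p(4)] u(2) h(2) by simp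
    show "cmp C d' (cmp C u h) = cmp C d' i'"
      using cmp_assoc[OF h(1) u(1) p(3)] u(3) cmp_zro_left[OF h(1) ob(3)] c'(3) by simp
  qed
  then have "cmp C k h = idm C x'"
    using kernel_cancel[OF K' cmp_hom[OF h(1) k(1)] idm_hom[OF ob(2)]]
      cmp_assoc[OF h(1) k(1) c'(1)] k(2) cmp_idm_right[OF c'(1)] by simp
  then show ?thesis
    using h k by blast
qed

lemma retraction_cmp:
  assumes "i \<in> Hom C x y" "j \<in> Hom C y w" "r \<in> Hom C y x" "r' \<in> Hom C w y"
    and "cmp C r i = idm C x" "cmp C r' j = idm C y"
  shows "cmp C (cmp C r r') (cmp C j i) = idm C x"
  using assms cmp_assoc[OF assms(1) assms(2) cmp_hom[OF assms(4,3)]] cmp_assoc[OF assms(2,4,3)]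
    cmp_assoc[OF assms(1) cmp_hom[OF assms(2,4)] assms(3)] cmp_idm_left[OF assms(1)] by simp

lemma section_cmp:
  assumes "d \<in> Hom C x y" "e \<in> Hom C y w" "s \<in> Hom C y x" "s' \<in> Hom C w y"
    and "cmp C d s = idm C y" "cmp C e s' = idm C w"
  shows "cmp C (cmp C e d) (cmp C s s') = idm C w"
  using assms cmp_assoc[OF assms(4) assms(3) cmp_hom[OF assms(1,2)]] cmp_assoc[OF assms(3,1,2)]
    cmp_assoc[OF assms(4) cmp_hom[OF assms(3,1)] assms(2)] cmp_idm_left[OF assms(4)] by simp

lemma section_transport:
  assumes d: "d \<in> Hom C y z" and s: "s \<in> Hom C z y" and ds: "cmp C d s = idm C z"
    and d': "d' \<in> Hom C y' z'" and f': "f' \<in> Hom C y y'" and h: "h \<in> Hom C z z'"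
    and k: "k \<in> Hom C z' z" and sq: "cmp C d' f' = cmp C h d" and hk: "cmp C h k = idm C z'"
  shows "cmp C d' (cmp C f' (cmp C s k)) = idm C z'"
proof -
  have sk: "cmp C s k \<in> Hom C z' y"
    using cmp_hom[OF k s] .
  have "cmp C d' (cmp C f' (cmp C s k)) = cmp C h (cmp C (cmp C d s) k)"
    using cmp_assoc[OF sk f' d'] sq cmp_assoc[OF sk d h, symmetric] cmp_assoc[OF k s d] by simp
  then show ?thesis
    using ds cmp_idm_left[OF k] hk by simp
qed

lemma retraction_transport:
  assumes i: "i \<in> Hom C x y" and r: "r \<in> Hom C y x" and ri: "cmp C r i = idm C x"
    and i': "i' \<in> Hom C x' y'" and f': "f' \<in> Hom C y' y" and h: "h \<in> Hom C x' x"
    and k: "k \<in> Hom C x x'" and sq: "cmp C f' i' = cmp C i h" and kh: "cmp C k h = idm C x'"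
  shows "cmp C (cmp C (cmp C k r) f') i' = idm C x'"
proof -
  have kr: "cmp C k r \<in> Hom C y x'"
    using cmp_hom[OF r k] .
  have "cmp C (cmp C (cmp C k r) f') i' = cmp C (cmp C k (cmp C r i)) h"
    using cmp_assoc[OF i' f' kr, symmetric] sq cmp_assoc[OF h i kr] cmp_assoc[OF i r k, symmetric]
    by simp
  then show ?thesis
    using ri cmp_idm_right[OF k] kh by simp
qed

end

lemma exact_categoryD:
  assumes "exact_category C E"
  shows exact_category_additive: "additive C"
    and conflation_kc_pair: "s \<in> E \<Longrightarrow> kc_pair C s"
    and adm_mono_idm: "a \<in> Ob C \<Longrightarrow> adm_mono C E a a (idm C a)"
    and adm_epi_idm: "a \<in> Ob C \<Longrightarrow> adm_epi C E a a (idm C a)"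
    and adm_mono_cmp: "adm_mono C E x y i \<Longrightarrow> adm_mono C E y w j \<Longrightarrow> adm_mono C E x w (cmp C j i)"
    and adm_epi_cmp: "adm_epi C E x y d \<Longrightarrow> adm_epi C E y w e \<Longrightarrow> adm_epi C E x w (cmp C e d)"
    and adm_mono_pushout: "adm_mono C E x y i \<Longrightarrow> f \<in> Hom C x x' \<Longrightarrow>
      \<exists>y' i' f'. is_pushout C x y x' y' i f i' f' \<and> adm_mono C E x' y' i'"
    and adm_epi_pullback: "adm_epi C E y z d \<Longrightarrow> g \<in> Hom C z' z \<Longrightarrow>
      \<exists>y' d' g'. is_pullback C y z y' z' d g d' g' \<and> adm_epi C E y' z' d'"
  using assms unfolding exact_category_def by auto

lemma conflation_iso_closed:
  "exact_category C E \<Longrightarrow> s \<in> E \<Longrightarrow> iso_seq C s t \<Longrightarrow> t \<in> E"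
  unfolding exact_category_def by (elim conjE) blast

locale exact_functor_setting =
  fixes A :: "('o, 'm, 'x) addcat_scheme" and E :: "('o, 'm) sseq set"
    and B :: "('p, 'n, 'y) addcat_scheme" and F :: "('p, 'n) sseq set"
    and LO :: "'o \<Rightarrow> 'p" and LM :: "'m \<Rightarrow> 'n"
  assumes exact_A: "exact_category A E"
    and exact_B: "exact_category B F"
    and exact_L: "exact_functor A E B F LO LM"
begin

sublocale A: preadditive_category A
  using exact_category_additive[OF exact_A] unfolding additive_def preadditive_category_def by blast

sublocale B: preadditive_category B
  using exact_category_additive[OF exact_B] unfolding additive_def preadditive_category_def by blast

lemma additive_L: "additive_functor A B LO LM"
  using exact_L unfolding exact_functor_def by blast

lemma LM_hom: "f \<in> Hom A a b \<Longrightarrow> LM f \<in> Hom B (LO a) (LO b)"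
  using additive_L unfolding additive_functor_def by blast

lemma LM_idm: "a \<in> Ob A \<Longrightarrow> LM (idm A a) = idm B (LO a)"
  using additive_L unfolding additive_functor_def by blast

lemma LM_cmp: "f \<in> Hom A a b \<Longrightarrow> g \<in> Hom A b c \<Longrightarrow> LM (cmp A g f) = cmp B (LM g) (LM f)"
  using additive_L unfolding additive_functor_def by blast

lemma LM_iso:
  assumes "iso A a b f"
  shows "iso B (LO a) (LO b) (LM f)"
proof -
  obtain g where "f \<in> Hom A a b" "g \<in> Hom A b a" "cmp A g f = idm A a" "cmp A f g = idm A b"
    using assms unfolding iso_def by blast
  then show ?thesis
    unfolding iso_def using LM_hom LM_cmp LM_idm A.hom_dom A.hom_cod by metis
qed

lemma LM_iso_seq:
  assumes "iso_seq A (x, y, z, i, d) (x', y', z', i', d')"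
  shows "iso_seq B (LO x, LO y, LO z, LM i, LM d) (LO x', LO y', LO z', LM i', LM d')"
proof -
  obtain a b c where h: "i \<in> Hom A x y" "d \<in> Hom A y z" "i' \<in> Hom A x' y'" "d' \<in> Hom A y' z'"
    and isos: "iso A x x' a" "iso A y y' b" "iso A z z' c"
    and sq: "cmp A b i = cmp A i' a" "cmp A c d = cmp A d' b"
    using assms unfolding iso_seq_def by auto
  have "cmp B (LM b) (LM i) = cmp B (LM i') (LM a)" "cmp B (LM c) (LM d) = cmp B (LM d') (LM b)"
    using sq h isos LM_cmp unfolding iso_def by metis+
  then show ?thesis
    unfolding iso_seq_def prod.case using h isos LM_hom LM_iso by blast
qed

lemma conflation_homs:
  assumes "(x, y, z, i, d) \<in> E"
  shows "i \<in> Hom A x y" "d \<in> Hom A y z" "is_kernel A x y z i d" "is_cokernel A x y z i d"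
  using conflation_kc_pair[OF exact_A assms] unfolding kc_pair_def is_kernel_def by auto

lemma image_kc_pair:
  assumes "(x, y, z, i, d) \<in> E"
  shows "kc_pair B (LO x, LO y, LO z, LM i, LM d)"
proof -
  have "(LO x, LO y, LO z, LM i, LM d) \<in> F"
    using exact_L assms unfolding exact_functor_def map_seq_def by fastforce
  then show ?thesis
    by (rule conflation_kc_pair[OF exact_B])
qed

lemma E_L0_iff_retraction:
  "(x, y, z, i, d) \<in> E_L0 E B LO LM \<longleftrightarrow>
     (x, y, z, i, d) \<in> E \<and> (\<exists>r \<in> Hom B (LO y) (LO x). cmp B r (LM i) = idm B (LO x))"
  unfolding E_L0_def map_seq_def using B.kc_pair_split_exact_iff_retraction[OF image_kc_pair] by auto

lemma E_L0_iff_section: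
  "(x, y, z, i, d) \<in> E_L0 E B LO LM \<longleftrightarrow>
     (x, y, z, i, d) \<in> E \<and> (\<exists>s \<in> Hom B (LO z) (LO y). cmp B (LM d) s = idm B (LO z))"
  unfolding E_L0_def map_seq_def using B.kc_pair_split_exact_iff_section[OF image_kc_pair] by auto

abbreviation EL0 :: "('o, 'm) sseq set" where
  "EL0 \<equiv> E_L0 E B LO LM"

lemma E_L0_subset: "EL0 \<subseteq> E"
  unfolding E_L0_def by blast

lemma E_L0_iso_closed:
  assumes s: "s \<in> EL0" and st: "iso_seq A s t"
  shows "t \<in> EL0"
proof -
  obtain x y z i d where s_def: "s = (x, y, z, i, d)"
    by (cases s) auto
  obtain x' y' z' i' d' where t_def: "t = (x', y', z', i', d')"
    by (cases t) auto
  have "t \<in> E"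
    using conflation_iso_closed[OF exact_A] s st E_L0_subset by blast
  moreover have "iso_seq B (LO x', LO y', LO z', LM i', LM d') (LO x, LO y, LO z, LM i, LM d)"
    using B.iso_seq_sym[OF LM_iso_seq] st unfolding s_def t_def by blast
  ultimately show ?thesis
    using B.iso_seq_retraction s unfolding s_def t_def E_L0_iff_retraction by blast
qed

lemma E_L0_adm_mono_idm:
  assumes a: "a \<in> Ob A"
  shows "adm_mono A EL0 a a (idm A a)"
proof -
  obtain z d where "(a, a, z, idm A a, d) \<in> E"
    using adm_mono_idm[OF exact_A a] unfolding adm_mono_def by blast
  moreover have "LO a \<in> Ob B"
    using B.hom_dom[OF LM_hom[OF A.idm_hom[OF a]]] .
  ultimately have "(a, a, z, idm A a, d) \<in> EL0"
    unfolding E_L0_iff_retraction using LM_idm[OF a] B.idm_hom B.cmp_idm_left by metis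
  then show ?thesis
    unfolding adm_mono_def by blast
qed

lemma E_L0_adm_epi_idm:
  assumes a: "a \<in> Ob A"
  shows "adm_epi A EL0 a a (idm A a)"
proof -
  obtain x i where "(x, a, a, i, idm A a) \<in> E"
    using adm_epi_idm[OF exact_A a] unfolding adm_epi_def by blast
  moreover have "LO a \<in> Ob B"
    using B.hom_dom[OF LM_hom[OF A.idm_hom[OF a]]] .
  ultimately have "(x, a, a, i, idm A a) \<in> EL0"
    unfolding E_L0_iff_section using LM_idm[OF a] B.idm_hom B.cmp_idm_left by metis
  then show ?thesis
    unfolding adm_epi_def by blast
qed

lemma E_L0_adm_mono_cmp:
  assumes "adm_mono A EL0 x y i" and "adm_mono A EL0 y w j"
  shows "adm_mono A EL0 x w (cmp A j i)"
proof -
  obtain z d z' d' where s: "(x, y, z, i, d) \<in> EL0" and s': "(y, w, z', j, d') \<in> EL0"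
    using assms unfolding adm_mono_def by blast
  obtain r r' where r: "r \<in> Hom B (LO y) (LO x)" "cmp B r (LM i) = idm B (LO x)"
    and r': "r' \<in> Hom B (LO w) (LO y)" "cmp B r' (LM j) = idm B (LO y)"
    using s s' unfolding E_L0_iff_retraction by blast
  have i: "i \<in> Hom A x y"
    using conflation_homs(1) s E_L0_subset by blast
  have j: "j \<in> Hom A y w"
    using conflation_homs(1) s' E_L0_subset by blast
  have "adm_mono A E x w (cmp A j i)"
    using adm_mono_cmp[OF exact_A] s s' E_L0_subset unfolding adm_mono_def by blast
  then obtain z'' e where "(x, w, z'', cmp A j i, e) \<in> E"
    unfolding adm_mono_def by blast
  moreover have "cmp B (cmp B r r') (LM (cmp A j i)) = idm B (LO x)"
    using B.retraction_cmp[OF LM_hom[OF i] LM_hom[OF j] r(1) r'(1) r(2) r'(2)] LM_cmp[OF i j] by simp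
  ultimately show ?thesis
    unfolding adm_mono_def E_L0_iff_retraction using B.cmp_hom[OF r'(1) r(1)] by blast
qed

lemma E_L0_adm_epi_cmp:
  assumes "adm_epi A EL0 x y d" and "adm_epi A EL0 y w e"
  shows "adm_epi A EL0 x w (cmp A e d)"
proof -
  obtain v i v' i' where s: "(v, x, y, i, d) \<in> EL0" and s': "(v', y, w, i', e) \<in> EL0"
    using assms unfolding adm_epi_def by blast
  obtain \<sigma> \<sigma>' where \<sigma>: "\<sigma> \<in> Hom B (LO y) (LO x)" "cmp B (LM d) \<sigma> = idm B (LO y)"
    and \<sigma>': "\<sigma>' \<in> Hom B (LO w) (LO y)" "cmp B (LM e) \<sigma>' = idm B (LO w)"
    using s s' unfolding E_L0_iff_section by blast
  have d: "d \<in> Hom A x y"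
    using conflation_homs(2) s E_L0_subset by blast
  have e: "e \<in> Hom A y w"
    using conflation_homs(2) s' E_L0_subset by blast
  have "adm_epi A E x w (cmp A e d)"
    using adm_epi_cmp[OF exact_A] s s' E_L0_subset unfolding adm_epi_def by blast
  then obtain v'' k where "(v'', x, w, k, cmp A e d) \<in> E"
    unfolding adm_epi_def by blast
  moreover have "cmp B (LM (cmp A e d)) (cmp B \<sigma> \<sigma>') = idm B (LO w)"
    using B.section_cmp[OF LM_hom[OF d] LM_hom[OF e] \<sigma>(1) \<sigma>'(1) \<sigma>(2) \<sigma>'(2)] LM_cmp[OF d e] by simp
  ultimately show ?thesis
    unfolding adm_epi_def E_L0_iff_section using B.cmp_hom[OF \<sigma>'(1) \<sigma>(1)] by blast
qed

lemma E_L0_adm_mono_pushout: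
  assumes "adm_mono A EL0 x y i" and f: "f \<in> Hom A x x'"
  shows "\<exists>y' i' f'. is_pushout A x y x' y' i f i' f' \<and> adm_mono A EL0 x' y' i'"
proof -
  obtain z d where s: "(x, y, z, i, d) \<in> EL0"
    using assms(1) unfolding adm_mono_def by blast
  then have "adm_mono A E x y i"
    using E_L0_subset unfolding adm_mono_def by blast
  then obtain y' i' f' where P: "is_pushout A x y x' y' i f i' f'" and "adm_mono A E x' y' i'"
    using adm_mono_pushout[OF exact_A _ f] by blast
  then obtain z' d' where s': "(x', y', z', i', d') \<in> E"
    unfolding adm_mono_def by blast
  have sE: "(x, y, z, i, d) \<in> E"
    using s E_L0_subset by blast
  obtain h k where h: "h \<in> Hom A z z'" and k: "k \<in> Hom A z' z"
    and sq: "cmp A h d = cmp A d' f'" and hk: "cmp A h k = idm A z'"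
    using A.pushout_cokernel_comparison[OF conflation_homs(4)[OF sE] conflation_homs(4)[OF s'] P]
    by blast
  obtain \<sigma> where \<sigma>: "\<sigma> \<in> Hom B (LO z) (LO y)" "cmp B (LM d) \<sigma> = idm B (LO z)"
    using s unfolding E_L0_iff_section by blast
  note d = conflation_homs(2)[OF sE] and d' = conflation_homs(2)[OF s']
    and f' = A.pushout_homs(4)[OF P]
  have "cmp B (LM d') (LM f') = cmp B (LM h) (LM d)"
    using sq LM_cmp[OF d h] LM_cmp[OF f' d'] by simp
  moreover have "cmp B (LM h) (LM k) = idm B (LO z')"
    using hk LM_cmp[OF k h] LM_idm[OF A.hom_cod[OF h]] by simp
  ultimately have "cmp B (LM d') (cmp B (LM f') (cmp B \<sigma> (LM k))) = idm B (LO z')"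
    using B.section_transport[OF LM_hom[OF d] \<sigma> LM_hom[OF d'] LM_hom[OF f'] LM_hom[OF h] LM_hom[OF k]]
    by blast
  then have "(x', y', z', i', d') \<in> EL0"
    unfolding E_L0_iff_section
    using s' B.cmp_hom[OF B.cmp_hom[OF LM_hom[OF k] \<sigma>(1)] LM_hom[OF f']] by blast
  then show ?thesis
    using P unfolding adm_mono_def by blast
qed

lemma E_L0_adm_epi_pullback:
  assumes "adm_epi A EL0 y z d" and g: "g \<in> Hom A z' z"
  shows "\<exists>y' d' g'. is_pullback A y z y' z' d g d' g' \<and> adm_epi A EL0 y' z' d'"
proof -
  obtain x i where s: "(x, y, z, i, d) \<in> EL0"
    using assms(1) unfolding adm_epi_def by blast
  then have "adm_epi A E y z d"
    using E_L0_subset unfolding adm_epi_def by blast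
  then obtain y' d' g' where P: "is_pullback A y z y' z' d g d' g'" and "adm_epi A E y' z' d'"
    using adm_epi_pullback[OF exact_A _ g] by blast
  then obtain x' i' where s': "(x', y', z', i', d') \<in> E"
    unfolding adm_epi_def by blast
  have sE: "(x, y, z, i, d) \<in> E"
    using s E_L0_subset by blast
  obtain h k where h: "h \<in> Hom A x' x" and k: "k \<in> Hom A x x'"
    and sq: "cmp A i h = cmp A g' i'" and kh: "cmp A k h = idm A x'"
    using A.pullback_kernel_comparison[OF conflation_homs(3)[OF sE] conflation_homs(3)[OF s'] P]
    by blast
  obtain \<rho> where \<rho>: "\<rho> \<in> Hom B (LO y) (LO x)" "cmp B \<rho> (LM i) = idm B (LO x)"
    using s unfolding E_L0_iff_retraction by blast
  note i = conflation_homs(1)[OF sE] and i' = conflation_homs(1)[OF s']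
    and g' = A.pullback_homs(4)[OF P]
  have "cmp B (LM g') (LM i') = cmp B (LM i) (LM h)"
    using sq LM_cmp[OF h i] LM_cmp[OF i' g'] by simp
  moreover have "cmp B (LM k) (LM h) = idm B (LO x')"
    using kh LM_cmp[OF h k] LM_idm[OF A.hom_dom[OF h]] by simp
  ultimately have "cmp B (cmp B (cmp B (LM k) \<rho>) (LM g')) (LM i') = idm B (LO x')"
    using B.retraction_transport[OF LM_hom[OF i] \<rho> LM_hom[OF i'] LM_hom[OF g'] LM_hom[OF h] LM_hom[OF k]]
    by blast
  then have "(x', y', z', i', d') \<in> EL0"
    unfolding E_L0_iff_retraction
    using s' B.cmp_hom[OF LM_hom[OF g'] B.cmp_hom[OF \<rho>(1) LM_hom[OF k]]] by blast
  then show ?thesis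
    using P unfolding adm_epi_def by blast
qed

lemma exact_category_E_L0: "exact_category A EL0"
  unfolding exact_category_def
proof (intro conjI ballI allI impI)
  show "additive A"
    using exact_category_additive[OF exact_A] .
  show "kc_pair A s" if "s \<in> EL0" for s
    using conflation_kc_pair[OF exact_A] E_L0_subset that by blast
qed (rule E_L0_iso_closed E_L0_adm_mono_idm E_L0_adm_epi_idm E_L0_adm_mono_cmp E_L0_adm_epi_cmp
    E_L0_adm_mono_pushout E_L0_adm_epi_pullback; assumption)+

end

theorem mainTheorem2:
  fixes A :: "('o, 'm) addcat" and B :: "('p, 'n) addcat"
    and E :: "('o, 'm) sseq set" and F :: "('p, 'n) sseq set"
    and LO :: "'o \<Rightarrow> 'p" and LM :: "'m \<Rightarrow> 'n"
  assumes "exact_category A E"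
    and "exact_category B F"
    and "exact_functor A E B F LO LM"
  shows "exact_category A (E_L0 E B LO LM)"
proof -
  interpret exact_functor_setting A E B F LO LM
    using assms by unfold_locales
  show ?thesis
    by (rule exact_category_E_L0)
qed

end
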